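(* Let $d\ge1$, let $D\subset\mathbb{R}^d$ be Lebesgue measurable with $Leb(Conv(D))<\infty$, and let $f:D\to\mathbb{R}$ be bounded. Then the functions $$G_1(r):=\int_D\sup_{y\in B_r(x)\cap D}f(y)\,\mathrm{d}\mu(x),\quad G_2(r):=\int_D\inf_{y\in B_r(x)\cap D}f(y)\,\mathrm{d}\mu(x),\quad I(r):=\int_D (osc_r f)\,\mathrm{d}\mu$$ are continuous at every $r>0$.
   Context: $Conv(D)$ is the convex hull of $D$, $B_r(x)=\{y:|y-x|<r\}$ is the open Euclidean ball, $\mu=c\cdot Leb$ for a fixed constant $c>0$ with $Leb$ Lebesgue measure, and $(osc_r f)(x):=\sup_{y\in B_r(x)\cap D}f(y)-\inf_{y\in B_r(x)\cap D}f(y)$. *)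

theory Defs
  imports "HOL-Analysis.Analysis"
begin

definition mu :: "real \<Rightarrow> 'a::euclidean_space measure" where
  "mu c = scale_measure (ennreal c) lebesgue"

definition locsup :: "'a::euclidean_space set \<Rightarrow> ('a \<Rightarrow> real) \<Rightarrow> real \<Rightarrow> 'a \<Rightarrow> real" where
  "locsup D f r x = (SUP y \<in> ball x r \<inter> D. f y)"

definition locinf :: "'a::euclidean_space set \<Rightarrow> ('a \<Rightarrow> real) \<Rightarrow> real \<Rightarrow> 'a \<Rightarrow> real" where
  "locinf D f r x = (INF y \<in> ball x r \<inter> D. f y)"

definition osc :: "'a::euclidean_space set \<Rightarrow> ('a \<Rightarrow> real) \<Rightarrow> real \<Rightarrow> 'a \<Rightarrow> real" where
  "osc D f r x = locsup D f r x - locinf D f r x"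

end

theory Submission
  imports Defs
begin

text \<open>
  For fixed \<open>x\<close>, the map \<open>s \<mapsto> sup f(B\<^sub>s(x) \<inter> D)\<close> is nondecreasing, and it can only be
  discontinuous at \<open>s = r\<close> if, for some rational \<open>q\<close>, the set \<open>{f > q}\<close> lies at distance exactly
  \<open>r\<close> from \<open>x\<close>. Level sets \<open>{x. dist(x, U) = r}\<close> with \<open>r > 0\<close> are Lebesgue null, so for almost
  every \<open>x\<close> the local sup and inf are continuous at \<open>r\<close>, and bounded convergence gives
  continuity of the integrals.

  A level set \<open>{dist(\<cdot>, V) = r}\<close> of a closed set \<open>V\<close> is null because moving each point towards a
  nearest point of \<open>V\<close> by the factor \<open>s \<in> [1/8, 1/4]\<close> maps it into the level set \<open>s r\<close>,
  injectively and with Lipschitz inverse; the uncountably many disjoint level sets \<open>s r\<close>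
  cannot all have positive measure, and Lipschitz maps preserve null sets.
\<close>

lemma finite_disjoint_family_measure_gt:
  assumes meas: "\<And>i. i \<in> I \<Longrightarrow> A i \<in> sets M" and sub: "\<And>i. i \<in> I \<Longrightarrow> A i \<subseteq> W"
    and W: "W \<in> fmeasurable M" and disj: "disjoint_family_on A I" and e: "e > 0"
  shows "finite {i \<in> I. e < measure M (A i)}"
proof (rule ccontr)
  let ?J = "{i \<in> I. e < measure M (A i)}"
  assume "infinite ?J"
  obtain N :: nat where N: "measure M W / e < N" using reals_Archimedean2 by blast
  obtain F where F: "F \<subseteq> ?J" "finite F" "card F = N"
    using infinite_arbitrarily_large[OF \<open>infinite ?J\<close>] by blast
  have AF: "A i \<in> fmeasurable M" if "i \<in> F" for i
    using F that meas sub W by (blast intro: fmeasurableI2)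
  have "N * e = (\<Sum>i\<in>F. e)" using F by simp
  also have "\<dots> \<le> (\<Sum>i\<in>F. measure M (A i))"
    using F by (intro sum_mono) auto
  also have "\<dots> = measure M (\<Union>i\<in>F. A i)"
    using F AF disj by (intro measure_finite_Union[symmetric])
      (auto simp: fmeasurable_def less_top intro: disjoint_family_on_mono)
  also have "\<dots> \<le> measure M W"
    using F AF sub W by (intro measure_mono_fmeasurable) (auto simp: fmeasurable_def)
  finally show False using N e by (simp add: field_simps)
qed

lemma uncountable_disjoint_family_ex_measure_zero:
  assumes "uncountable I" and "\<And>i. i \<in> I \<Longrightarrow> A i \<in> sets M" and "\<And>i. i \<in> I \<Longrightarrow> A i \<subseteq> W"
    and "W \<in> fmeasurable M" and "disjoint_family_on A I"
  shows "\<exists>i\<in>I. measure M (A i) = 0"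
proof (rule ccontr)
  define J where "J n = {i \<in> I. 1 / Suc n < measure M (A i)}" for n :: nat
  assume "\<not> ?thesis"
  then have pos: "0 < measure M (A i)" if "i \<in> I" for i
    using that measure_nonneg[of M "A i"] by (auto simp: less_le)
  have "I \<subseteq> (\<Union>n. J n)"
  proof
    fix i assume "i \<in> I"
    obtain n where "1 / Suc n < measure M (A i)" by (rule nat_approx_posE[OF pos[OF \<open>i \<in> I\<close>]])
    with \<open>i \<in> I\<close> show "i \<in> (\<Union>n. J n)" by (auto simp: J_def)
  qed
  moreover have "finite (J n)" for n
    unfolding J_def using assms by (intro finite_disjoint_family_measure_gt) auto
  then have "countable (\<Union>n. J n)" by (simp add: countable_finite)
  ultimately have "countable I" by (rule countable_subset)
  with \<open>uncountable I\<close> show False by simp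
qed

lemma infdist_shrink_towards_nearest:
  fixes x a :: "'a::real_normed_vector"
  assumes a: "a \<in> V" "infdist x V = dist x a" and s: "0 \<le> s" "s \<le> 1"
  shows "infdist (a + s *\<^sub>R (x - a)) V = s * dist x a"
proof -
  let ?p = "a + s *\<^sub>R (x - a)"
  have "?p - a = s *\<^sub>R (x - a)" "x - ?p = (1 - s) *\<^sub>R (x - a)"
    by (simp_all add: algebra_simps)
  then have pa: "dist ?p a = s * dist x a" and xp: "dist x ?p = (1 - s) * dist x a"
    using s by (simp_all add: dist_norm)
  have "infdist ?p V \<le> s * dist x a" using infdist_le[OF a(1), of ?p] pa by simp
  moreover have "infdist x V \<le> infdist ?p V + dist x ?p" by (rule infdist_triangle)
  ultimately show ?thesis using a(2) xp by (simp add: algebra_simps)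
qed

text \<open>
  Here \<open>a\<close> and \<open>b\<close> are nearest points to \<open>x\<close> and \<open>y\<close> of a set whose distance from \<open>x\<close>
  and \<open>y\<close> is \<open>r\<close>. With \<open>d = b - a\<close> and \<open>\<Delta> = (x - a) - (y - b)\<close>, the nearest-point
  property gives \<open>d \<bullet> \<Delta> \<le> |d|\<^sup>2\<close>, whence \<open>|s \<Delta> - d|\<^sup>2 \<ge> |\<Delta>|\<^sup>2/64 + |d|\<^sup>2/2\<close>
  while \<open>|x - y|\<^sup>2 = |\<Delta> - d|\<^sup>2 \<le> 2|\<Delta>|\<^sup>2 + 2|d|\<^sup>2\<close>.
\<close>
lemma norm_diff_le_shrink_towards_nearest:
  fixes x y a b :: "'a::real_inner"
  assumes s: "1/8 \<le> s" "s \<le> 1/4"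
    and xa: "norm (x - a) = r" and yb: "norm (y - b) = r"
    and xb: "r \<le> norm (x - b)" and ya: "r \<le> norm (y - a)"
  shows "norm (x - y) \<le> 12 * norm ((a + s *\<^sub>R (x - a)) - (b + s *\<^sub>R (y - b)))"
proof -
  define d where "d = b - a"
  define \<Delta> where "\<Delta> = (x - a) - (y - b)"
  have r: "0 \<le> r" using xa by auto
  have "r\<^sup>2 \<le> (norm ((x - a) - d))\<^sup>2" "r\<^sup>2 \<le> (norm ((y - b) + d))\<^sup>2"
    using xb ya r by (simp_all add: power_mono d_def algebra_simps)
  moreover have "(norm (x - a))\<^sup>2 = r\<^sup>2" "(norm (y - b))\<^sup>2 = r\<^sup>2" using xa yb by simp_all
  ultimately have nearest: "d \<bullet> \<Delta> \<le> d \<bullet> d"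
    unfolding \<Delta>_def power2_norm_eq_inner
    by (simp add: inner_diff_left inner_diff_right inner_add_left inner_add_right inner_commute)
  have "0 \<le> (d - \<Delta>) \<bullet> (d - \<Delta>)" "0 \<le> (d + \<Delta>) \<bullet> (d + \<Delta>)" by simp_all
  then have cs: "2 * \<bar>d \<bullet> \<Delta>\<bar> \<le> d \<bullet> d + \<Delta> \<bullet> \<Delta>"
    by (simp add: inner_diff_left inner_diff_right inner_add_left inner_add_right inner_commute abs_le_iff)
  have lhs: "(norm (x - y))\<^sup>2 = \<Delta> \<bullet> \<Delta> - 2 * (d \<bullet> \<Delta>) + d \<bullet> d"
    unfolding power2_norm_eq_inner
    by (simp add: \<Delta>_def d_def inner_diff_left inner_diff_right inner_commute algebra_simps)
  have shrink: "(a + s *\<^sub>R (x - a)) - (b + s *\<^sub>R (y - b)) = s *\<^sub>R \<Delta> - d"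
    by (simp add: \<Delta>_def d_def algebra_simps)
  have "(norm (s *\<^sub>R \<Delta> - d))\<^sup>2 = s\<^sup>2 * (\<Delta> \<bullet> \<Delta>) - 2 * s * (d \<bullet> \<Delta>) + d \<bullet> d"
    unfolding power2_norm_eq_inner
    by (simp add: inner_diff_left inner_diff_right inner_commute power2_eq_square)
  moreover have "1/64 * (\<Delta> \<bullet> \<Delta>) \<le> s\<^sup>2 * (\<Delta> \<bullet> \<Delta>)"
    using mult_mono[of "1/8" s "1/8" s] s by (intro mult_right_mono) (simp_all add: power2_eq_square)
  moreover have "s * (d \<bullet> \<Delta>) \<le> s * (d \<bullet> d)" using nearest s by (simp add: mult_left_mono)
  moreover have "s * (d \<bullet> d) \<le> 1/4 * (d \<bullet> d)" using s by (intro mult_right_mono) simp_all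
  ultimately have "(norm (x - y))\<^sup>2 \<le> 144 * (norm (s *\<^sub>R \<Delta> - d))\<^sup>2"
    using lhs cs inner_ge_zero[of d] inner_ge_zero[of \<Delta>] by linarith
  then have "(norm (x - y))\<^sup>2 \<le> (12 * norm (s *\<^sub>R \<Delta> - d))\<^sup>2"
    by (simp add: power_mult_distrib)
  then show ?thesis unfolding shrink by (rule power2_le_imp_le) simp
qed

lemma negligible_if_inverse_Lipschitz_image_negligible:
  fixes \<phi> :: "'a::euclidean_space \<Rightarrow> 'b::euclidean_space"
  assumes "DIM('b) \<le> DIM('a)" and "negligible (\<phi> ` K)"
    and lip: "\<And>x y. x \<in> K \<Longrightarrow> y \<in> K \<Longrightarrow> norm (x - y) \<le> C * norm (\<phi> x - \<phi> y)"
  shows "negligible K"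
proof -
  have inj: "inj_on \<phi> K" using lip by (fastforce intro: inj_onI)
  have "negligible (inv_into K \<phi> ` \<phi> ` K)"
  proof (rule negligible_locally_Lipschitz_image[OF assms(1,2)])
    fix p assume "p \<in> \<phi> ` K"
    then show "\<exists>T B. open T \<and> p \<in> T \<and>
        (\<forall>q \<in> \<phi> ` K \<inter> T. norm (inv_into K \<phi> q - inv_into K \<phi> p) \<le> B * norm (q - p))"
      using lip inj by (intro exI[of _ UNIV] exI[of _ C]) auto
  qed
  then show ?thesis using inj by simp
qed

lemma ex_negligible_infdist_level_Int_cball:
  fixes V :: "'a::euclidean_space set"
  assumes r: "r > 0"
  shows "\<exists>s\<in>{1/8..1/4::real}. negligible ({x. infdist x V = s * r} \<inter> cball 0 R)"
proof -
  have meas: "{x. infdist x V = \<rho>} \<inter> cball 0 R \<in> lmeasurable" for \<rho>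
    by (intro lmeasurable_compact closed_Int_compact closed_Collect_eq continuous_intros compact_cball)
  have "\<exists>s\<in>{1/8..1/4::real}. measure lebesgue ({x. infdist x V = s * r} \<inter> cball 0 R) = 0"
  proof (rule uncountable_disjoint_family_ex_measure_zero)
    show "uncountable {1/8..1/4::real}" by (simp add: uncountable_closed_interval)
    show "{x. infdist x V = s * r} \<inter> cball 0 R \<in> sets lebesgue" for s
      using meas by (rule fmeasurableD)
    show "disjoint_family_on (\<lambda>s. {x. infdist x V = s * r} \<inter> cball 0 R) {1/8..1/4}"
      unfolding disjoint_family_on_def using r by auto
  qed auto
  then show ?thesis by (simp add: negligible_iff_measure0[OF meas])
qed

lemma negligible_infdist_level_Int_cball:
  fixes V :: "'a::euclidean_space set"
  assumes V: "closed V" "V \<noteq> {}" and r: "r > 0"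
  shows "negligible ({x. infdist x V = r} \<inter> cball 0 n)"
proof -
  define S where "S \<rho> = {x. infdist x V = \<rho>}" for \<rho>
  have "\<forall>x. \<exists>a. a \<in> V \<and> infdist x V = dist x a" using infdist_attains_inf[OF V] by metis
  then obtain u where u: "\<And>x. u x \<in> V" "\<And>x. infdist x V = dist x (u x)" by metis
  obtain s where s: "1/8 \<le> s" "s \<le> 1/4" and null: "negligible (S (s * r) \<inter> cball 0 (n + r))"
    using ex_negligible_infdist_level_Int_cball[OF r, of V "n + r"] unfolding S_def by auto
  define \<phi> where "\<phi> x = u x + s *\<^sub>R (x - u x)" for x
  have dist_u: "dist x (u x) = r" if "x \<in> S r" for x
    using that u by (simp add: S_def)
  show ?thesis
    unfolding S_def[symmetric]
  proof (rule negligible_if_inverse_Lipschitz_image_negligible[where \<phi> = \<phi> and C = 12])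
    show "negligible (\<phi> ` (S r \<inter> cball 0 n))"
    proof (rule negligible_subset[OF null], safe)
      fix x assume x: "x \<in> S r" "x \<in> cball 0 n"
      have "infdist (\<phi> x) V = s * r"
        using infdist_shrink_towards_nearest[of "u x" V x s] u s dist_u[OF x(1)]
        by (simp add: \<phi>_def)
      moreover have "\<phi> x - x = (s - 1) *\<^sub>R (x - u x)" by (simp add: \<phi>_def algebra_simps)
      then have "norm (\<phi> x - x) \<le> r"
        using s r dist_u[OF x(1)] by (simp add: dist_norm)
      then have "norm (\<phi> x) \<le> n + r"
        using norm_triangle_sub[of "\<phi> x" x] x(2) by simp
      ultimately show "\<phi> x \<in> S (s * r)" "\<phi> x \<in> cball 0 (n + r)" by (simp_all add: S_def)
    qed
    show "norm (x - y) \<le> 12 * norm (\<phi> x - \<phi> y)" if "x \<in> S r \<inter> cball 0 n" "y \<in> S r \<inter> cball 0 n" for x y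
      unfolding \<phi>_def
    proof (rule norm_diff_le_shrink_towards_nearest[OF s])
      show "norm (x - u x) = r" "norm (y - u y) = r"
        using that dist_u by (auto simp: dist_norm)
      show "r \<le> norm (x - u y)" using that infdist_le[OF u(1), of x y] by (simp add: S_def dist_norm)
      show "r \<le> norm (y - u x)" using that infdist_le[OF u(1), of y x] by (simp add: S_def dist_norm)
    qed
  qed simp
qed

lemma negligible_infdist_level_closed:
  fixes V :: "'a::euclidean_space set"
  assumes "closed V" "V \<noteq> {}" and "r > 0"
  shows "negligible {x. infdist x V = r}"
proof (subst negligible_on_intervals, intro allI)
  fix a b :: 'a
  obtain n where "\<forall>x \<in> cbox a b. norm x \<le> n" using bounded_cbox[of a b] unfolding bounded_iff by blast
  then have "{x. infdist x V = r} \<inter> cbox a b \<subseteq> {x. infdist x V = r} \<inter> cball 0 n" by auto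
  with negligible_infdist_level_Int_cball[OF assms, of n]
  show "negligible ({x. infdist x V = r} \<inter> cbox a b)" by (rule negligible_subset)
qed

lemma negligible_infdist_level:
  fixes U :: "'a::euclidean_space set"
  assumes "r > 0"
  shows "negligible {x. infdist x U = r}"
proof (cases "U = {}")
  case False
  have "infdist x U = infdist x (closure U)" for x
    by (simp add: infdist_eq_setdist)
  then show ?thesis using negligible_infdist_level_closed[of "closure U" r] assms False by simp
qed (use assms in \<open>simp add: infdist_def\<close>)

lemma bdd_above_image_ball_Int:
  "bdd_above (h ` D) \<Longrightarrow> bdd_above (h ` (ball x s \<inter> D))"
  by (rule bdd_above_mono) auto

lemma locsup_upper:
  "bdd_above (h ` D) \<Longrightarrow> y \<in> ball x s \<inter> D \<Longrightarrow> h y \<le> locsup D h s x"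
  unfolding locsup_def by (rule cSUP_upper) (auto intro: bdd_above_image_ball_Int)

lemma locsup_least:
  "ball x s \<inter> D \<noteq> {} \<Longrightarrow> (\<And>y. y \<in> ball x s \<inter> D \<Longrightarrow> h y \<le> q) \<Longrightarrow> locsup D h s x \<le> q"
  unfolding locsup_def by (rule cSUP_least)

lemma less_locsup_iff:
  "bdd_above (h ` D) \<Longrightarrow> ball x s \<inter> D \<noteq> {} \<Longrightarrow>
    a < locsup D h s x \<longleftrightarrow> (\<exists>y \<in> ball x s \<inter> D. a < h y)"
  unfolding locsup_def by (intro less_cSUP_iff bdd_above_image_ball_Int)

text \<open>For \<open>s \<le> 0\<close> the ball is empty and \<open>locsup\<close> takes the junk value \<open>Sup {}\<close>.\<close>
lemma abs_locsup_le:
  assumes B: "\<And>y. y \<in> D \<Longrightarrow> \<bar>h y\<bar> \<le> B"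
  shows "\<bar>locsup D h s x\<bar> \<le> \<bar>B\<bar> + \<bar>Sup ({} :: real set)\<bar>"
proof (cases "ball x s \<inter> D = {}")
  case True
  then show ?thesis by (simp add: locsup_def)
next
  case False
  then obtain y where y: "y \<in> ball x s \<inter> D" by blast
  have bdd: "bdd_above (h ` D)" using B by (intro bdd_aboveI2[of _ _ B]) (auto simp: abs_le_iff)
  have "- B \<le> h y" using B[of y] y by (simp add: abs_le_iff)
  moreover have "h y \<le> locsup D h s x" by (rule locsup_upper[OF bdd y])
  moreover have "locsup D h s x \<le> B" using B by (intro locsup_least[OF False]) (simp add: abs_le_iff)
  ultimately show ?thesis by linarith
qed

lemma locsup_borel_measurable:
  assumes bdd: "bdd_above (h ` D)"
  shows "locsup D h s \<in> borel_measurable lebesgue"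
proof -
  have "locsup D h s \<in> borel_measurable borel"
    unfolding borel_measurable_iff_greater
  proof
    fix a
    let ?O = "\<Union>y \<in> {y \<in> D. a < h y}. ball y s"
    let ?C = "{x. a < Sup ({} :: real set) \<and> ball x s \<inter> D = {}}"
    have eq: "{x \<in> space borel. a < locsup D h s x} = ?O \<union> ?C"
    proof (intro set_eqI)
      fix x
      show "x \<in> {x \<in> space borel. a < locsup D h s x} \<longleftrightarrow> x \<in> ?O \<union> ?C"
      proof (cases "ball x s \<inter> D = {}")
        case True
        then have "x \<notin> ?O" by (force simp: dist_commute)
        with True show ?thesis by (simp add: locsup_def)
      next
        case False
        then show ?thesis by (auto simp: less_locsup_iff[OF bdd] dist_commute)
      qed
    qed
    have "?O \<in> sets borel" by (auto intro: borel_open)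
    moreover have "?C = (if a < Sup {} then (\<Inter>y\<in>D. {x. s \<le> dist x y}) else {})"
      unfolding disjoint_iff by (auto simp: not_less) (meson not_le)
    then have "?C \<in> sets borel"
      by (auto intro!: borel_closed closed_INT closed_Collect_le continuous_intros)
    ultimately show "{x \<in> space borel. a < locsup D h s x} \<in> sets borel"
      unfolding eq by (rule sets.Un)
  qed
  then show ?thesis by (simp add: measurable_completion)
qed

lemma isCont_locsup_radius:
  assumes bdd: "bdd_above (h ` D)" and r: "r > 0" and x: "x \<in> D"
    and levels: "\<And>q. q \<in> \<rat> \<Longrightarrow> infdist x {y \<in> D. q < h y} \<noteq> r"
  shows "isCont (\<lambda>s. locsup D h s x) r"
  unfolding continuous_at_eps_delta
proof (intro allI impI)
  fix e :: real assume e: "e > 0"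
  let ?M = "locsup D h r x"
  have "ball x r \<inter> D \<noteq> {}" using x r centre_in_ball by blast
  moreover have "?M - e < ?M" using e by simp
  ultimately obtain y where y: "y \<in> ball x r \<inter> D" "?M - e < h y"
    using less_locsup_iff[OF bdd] by blast
  obtain q where q: "q \<in> \<rat>" "?M < q" "q < ?M + e"
    using Rats_dense_in_real[of ?M "?M + e"] e by auto
  text \<open>Since \<open>{h > q}\<close> avoids \<open>B\<^sub>r(x)\<close> and is not at distance exactly \<open>r\<close>, it keeps away from a larger ball.\<close>
  obtain d where d: "d > 0" "\<And>z. z \<in> D \<Longrightarrow> dist x z < r + d \<Longrightarrow> h z \<le> q"
  proof (cases "{z \<in> D. q < h z} = {}")
    case True
    then show ?thesis using that[of 1] by force
  next
    case False
    let ?U = "{z \<in> D. q < h z}"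
    have "r \<le> dist x z" if "z \<in> ?U" for z
      using that locsup_upper[OF bdd, of z x r] q(2) by (force simp: not_le[symmetric])
    then have "r \<le> infdist x ?U"
      unfolding infdist_notempty[OF False] by (intro cINF_greatest False)
    with levels[OF q(1)] have "r < infdist x ?U" by simp
    then show ?thesis
      using that[of "infdist x ?U - r"] infdist_le[of _ ?U x] by force
  qed
  show "\<exists>\<delta>>0. \<forall>s. dist s r < \<delta> \<longrightarrow> dist (locsup D h s x) ?M < e"
  proof (intro exI conjI allI impI)
    show "0 < min (r - dist x y) d" using y d by simp
    fix s assume "dist s r < min (r - dist x y) d"
    then have ys: "y \<in> ball x s \<inter> D" and s: "s < r + d"
      using y by (auto simp: dist_real_def)
    have "h y \<le> locsup D h s x" by (rule locsup_upper[OF bdd ys])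
    moreover have "locsup D h s x \<le> q"
      using ys s d(2) by (intro locsup_least) auto
    ultimately show "dist (locsup D h s x) ?M < e"
      using y q by (simp add: dist_real_def abs_less_iff)
  qed
qed

lemma negligible_locsup_discontinuities:
  assumes "bdd_above (h ` D)" and "r > 0"
  obtains E where "negligible E" and "\<And>x. x \<in> D \<Longrightarrow> x \<notin> E \<Longrightarrow> isCont (\<lambda>s. locsup D h s x) r"
proof
  show "negligible (\<Union>q\<in>\<rat>. {x. infdist x {y \<in> D. q < h y} = r})"
    using assms(2) by (intro negligible_countable_Union countable_image countable_rat)
      (auto intro: negligible_infdist_level)
  show "isCont (\<lambda>s. locsup D h s x) r"
    if "x \<in> D" "x \<notin> (\<Union>q\<in>\<rat>. {x. infdist x {y \<in> D. q < h y} = r})" for x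
    using that assms by (intro isCont_locsup_radius) auto
qed

lemma locinf_eq_uminus_locsup:
  "locinf D f s x = - locsup D (\<lambda>y. - f y) s x"
  by (simp add: locinf_def locsup_def Inf_real_def image_image)

lemma continuous_at_set_integral_dominated:
  fixes g :: "real \<Rightarrow> 'a \<Rightarrow> real"
  assumes D: "D \<in> sets M" "emeasure M D < \<infinity>"
    and meas: "\<And>s. g s \<in> borel_measurable M"
    and bound: "\<And>s x. x \<in> D \<Longrightarrow> \<bar>g s x\<bar> \<le> K"
    and cont: "AE x in M. x \<in> D \<longrightarrow> isCont (\<lambda>s. g s x) r"
  shows "continuous (at r) (\<lambda>s. LINT x:D|M. g s x)"
  unfolding continuous_at_sequentially comp_def set_lebesgue_integral_def
proof (intro allI impI)
  fix \<sigma> :: "nat \<Rightarrow> real" assume \<sigma>: "\<sigma> \<longlonglongrightarrow> r"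
  have meas_D: "(\<lambda>x. indicator D x *\<^sub>R g s x) \<in> borel_measurable M" for s
    using meas[of s] D(1) by measurable
  show "(\<lambda>n. LINT x|M. indicator D x *\<^sub>R g (\<sigma> n) x) \<longlonglongrightarrow> (LINT x|M. indicator D x *\<^sub>R g r x)"
  proof (rule integral_dominated_convergence[OF meas_D meas_D])
    show "integrable M (\<lambda>x. indicator D x * K)"
      using D by (intro integrable_mult_left integrable_real_indicator)
    show "AE x in M. (\<lambda>n. indicator D x *\<^sub>R g (\<sigma> n) x) \<longlonglongrightarrow> indicator D x *\<^sub>R g r x"
      using cont by eventually_elim (auto intro: isCont_tendsto_compose[OF _ \<sigma>] simp: indicator_def)
    show "AE x in M. norm (indicator D x *\<^sub>R g (\<sigma> n) x) \<le> indicator D x * K" for n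
      using bound by (intro AE_I2) (auto simp: indicator_def)
  qed
qed

lemma continuous_at_set_integral_mu:
  fixes g :: "real \<Rightarrow> 'a::euclidean_space \<Rightarrow> real"
  assumes D: "D \<in> sets lebesgue" "emeasure lebesgue D < \<infinity>"
    and meas: "\<And>s. g s \<in> borel_measurable lebesgue"
    and bound: "\<And>s x. x \<in> D \<Longrightarrow> \<bar>g s x\<bar> \<le> K"
    and E: "negligible E" and cont: "\<And>x. x \<in> D \<Longrightarrow> x \<notin> E \<Longrightarrow> isCont (\<lambda>s. g s x) r"
  shows "continuous (at r) (\<lambda>s. LINT x:D|mu c. g s x)"
proof (rule continuous_at_set_integral_dominated[OF _ _ _ bound])
  have sets: "sets (mu c :: 'a measure) = sets lebesgue" by (simp add: mu_def)
  show "D \<in> sets (mu c)" using D(1) sets by simp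
  show "emeasure (mu c) D < \<infinity>" using D(2) by (simp add: mu_def ennreal_mult_less_top)
  show "g s \<in> borel_measurable (mu c)" for s
    unfolding measurable_cong_sets[OF sets refl] by (rule meas)
  have "E \<in> null_sets (mu c)"
    using E by (simp add: mu_def null_sets_def negligible_iff_null_sets)
  then show "AE x in mu c. x \<in> D \<longrightarrow> isCont (\<lambda>s. g s x) r"
    by (rule AE_I') (use cont in auto)
qed

lemma convex_imp_sets_lebesgue:
  fixes S :: "'a::euclidean_space set"
  assumes "convex S"
  shows "S \<in> sets lebesgue"
proof -
  have "interior S \<in> sets borel" by (intro borel_open open_interior)
  then have "interior S \<in> sets lebesgue" by (simp add: sets_completionI_sets)
  moreover have "negligible (S - interior S)"
    by (rule negligible_subset[OF negligible_convex_frontier[OF assms]])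
      (auto simp: frontier_def dest: closure_subset[THEN subsetD])
  then have "S - interior S \<in> sets lebesgue" by (rule negligible_imp_sets)
  ultimately have "interior S \<union> (S - interior S) \<in> sets lebesgue" by (rule sets.Un)
  then show ?thesis using interior_subset by (metis Diff_partition)
qed

theorem proposition3:
  fixes D :: "'a::euclidean_space set" and f :: "'a \<Rightarrow> real" and c :: real
  assumes "c > 0"
    and "D \<in> sets lebesgue"
    and "emeasure lebesgue (convex hull D) < \<infinity>"
    and "bounded (f ` D)"
    and "r > 0"
  shows "continuous (at r) (\<lambda>s. LINT x:D|mu c. locsup D f s x) \<and>
         continuous (at r) (\<lambda>s. LINT x:D|mu c. locinf D f s x) \<and>
         continuous (at r) (\<lambda>s. LINT x:D|mu c. osc D f s x)"
proof -
  obtain B where B: "\<And>y. y \<in> D \<Longrightarrow> \<bar>f y\<bar> \<le> B" using assms(4) by (auto simp: bounded_iff)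
  have bdd: "bdd_above (f ` D)" "bdd_above ((\<lambda>y. - f y) ` D)"
    using assms(4) by (simp_all add: bounded_imp_bdd_above bounded_imp_bdd_below bdd_above_uminus_image)
  obtain E\<^sub>1 E\<^sub>2 where E: "negligible E\<^sub>1" "negligible E\<^sub>2"
    and cont: "\<And>x. x \<in> D \<Longrightarrow> x \<notin> E\<^sub>1 \<Longrightarrow> isCont (\<lambda>s. locsup D f s x) r"
      "\<And>x. x \<in> D \<Longrightarrow> x \<notin> E\<^sub>2 \<Longrightarrow> isCont (\<lambda>s. locsup D (\<lambda>y. - f y) s x) r"
    using negligible_locsup_discontinuities[OF bdd(1) assms(5)]
      negligible_locsup_discontinuities[OF bdd(2) assms(5)] by metis
  have "emeasure lebesgue D \<le> emeasure lebesgue (convex hull D)"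
    by (intro emeasure_mono hull_subset convex_imp_sets_lebesgue convex_convex_hull)
  with assms(3) have "emeasure lebesgue D < \<infinity>" by simp
  note integral = continuous_at_set_integral_mu[OF assms(2) this _ _ negligible_Un[OF E]]
  define K where "K = \<bar>B\<bar> + \<bar>Sup ({} :: real set)\<bar>"
  have bound: "\<bar>locsup D f s x\<bar> \<le> K" "\<bar>locsup D (\<lambda>y. - f y) s x\<bar> \<le> K" for s x
    using B unfolding K_def by (auto intro: abs_locsup_le)
  then have osc_bound: "\<bar>locsup D f s x + locsup D (\<lambda>y. - f y) s x\<bar> \<le> 2 * K" for s x
    using add_mono[OF bound] by (auto intro: order_trans[OF abs_triangle_ineq])
  note facts = locsup_borel_measurable[OF bdd(1)] locsup_borel_measurable[OF bdd(2)] bound cont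
  have "continuous (at r) (\<lambda>s. LINT x:D|mu c. locsup D f s x)"
    by (rule integral[where K = K]) (simp_all add: facts)
  moreover have "continuous (at r) (\<lambda>s. LINT x:D|mu c. locinf D f s x)"
    unfolding locinf_eq_uminus_locsup
    by (rule integral[where K = K]) (auto intro!: continuous_intros borel_measurable_uminus simp: facts)
  moreover have "continuous (at r) (\<lambda>s. LINT x:D|mu c. osc D f s x)"
    unfolding osc_def locinf_eq_uminus_locsup
    by (rule integral[where K = "2 * K"])
      (auto intro!: continuous_intros borel_measurable_add osc_bound simp: facts)
  ultimately show ?thesis by blast
qed

end
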